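(* (i) Let $U_1=\ln Z_1-H_M(\underline\theta)$, $V=Z_2/Z_1\in[1,\infty)$ and $\rho=\min\{\theta_1,\theta_2\}/\max\{\theta_1,\theta_2\}\in(0,1]$. For every $v\ge1$, the conditional density of $U_1$ given $V=v$ is $$f_{2,\underline\theta}(u\mid v)=\frac{\rho^{-\alpha}e^{2\alpha u}e^{-(1+v/\rho)e^{u}}+\rho^{\alpha}e^{2\alpha u}e^{-(1+v\rho)e^{u}}}{\Gamma(2\alpha)\left[\dfrac{1}{\rho^{\alpha}(1+v/\rho)^{2\alpha}}+\dfrac{\rho^{\alpha}}{(1+v\rho)^{2\alpha}}\right]},\qquad -\infty<u<\infty.$$ (ii) For $v\ge1$ and $\rho\in(0,1]$ define $$k_v(\rho)=\frac{(1+v\rho)^{2\alpha}\ln\left(1+\frac{v}{\rho}\right)+(\rho+v)^{2\alpha}\ln(1+v\rho)}{(1+v\rho)^{2\alpha}+(\rho+v)^{2\alpha}}.$$ Then for every $v$ with $1\le v\le\min\{1+\frac{1}{2\alpha},\,1+\sqrt3\}$, $\inf_{0<\rho\le1}k_v(\rho)=\ln(1+v)$.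
   Context: Fix a known $\alpha>0$. $X_1,X_2$ are independent, $X_i$ having density $f(x\mid\theta_i)=\frac{x^{\alpha-1}e^{-x/\theta_i}}{\Gamma(\alpha)\theta_i^{\alpha}}$, $x>0$, with unknown $\underline\theta=(\theta_1,\theta_2)\in(0,\infty)^2$. $Z_1=\min\{X_1,X_2\}$, $Z_2=\max\{X_1,X_2\}$. $H_M(\underline\theta)=\ln\theta_1\, I(X_1\le X_2)+\ln\theta_2\, I(X_1>X_2)$. *)

theory Defs
  imports "HOL-Probability.Probability"
begin

definition gamma_density :: "real \<Rightarrow> real \<Rightarrow> real \<Rightarrow> real" where
  "gamma_density \<alpha> \<theta> x =
     (if x > 0 then x powr (\<alpha> - 1) * exp (- x / \<theta>) / (Gamma \<alpha> * \<theta> powr \<alpha>) else 0)"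

definition H_M :: "real \<Rightarrow> real \<Rightarrow> real \<Rightarrow> real \<Rightarrow> real" where
  "H_M \<theta>1 \<theta>2 x1 x2 = (if x1 \<le> x2 then ln \<theta>1 else ln \<theta>2)"

definition rho_of :: "real \<Rightarrow> real \<Rightarrow> real" where
  "rho_of \<theta>1 \<theta>2 = min \<theta>1 \<theta>2 / max \<theta>1 \<theta>2"

definition cond_dens :: "real \<Rightarrow> real \<Rightarrow> real \<Rightarrow> real \<Rightarrow> real" where
  "cond_dens \<alpha> \<rho> v u =
     (\<rho> powr (-\<alpha>) * exp (2*\<alpha>*u) * exp (- (1 + v/\<rho>) * exp u)
       + \<rho> powr \<alpha> * exp (2*\<alpha>*u) * exp (- (1 + v * \<rho>) * exp u))
     / (Gamma (2*\<alpha>) * (1 / (\<rho> powr \<alpha> * (1 + v/\<rho>) powr (2*\<alpha>))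
                          + \<rho> powr \<alpha> / (1 + v * \<rho>) powr (2*\<alpha>)))"

definition k_fun :: "real \<Rightarrow> real \<Rightarrow> real \<Rightarrow> real" where
  "k_fun \<alpha> v \<rho> =
     ((1 + v * \<rho>) powr (2*\<alpha>) * ln (1 + v/\<rho>) + (\<rho> + v) powr (2*\<alpha>) * ln (1 + v * \<rho>))
     / ((1 + v * \<rho>) powr (2*\<alpha>) + (\<rho> + v) powr (2*\<alpha>))"

end

theory Submission
  imports Defs
begin

text \<open>
  (i) Substituting \<open>x = \<theta> exp u\<close>, \<open>y = x v\<close> in the product density of \<open>(X\<^sub>1, X\<^sub>2)\<close>
  gives the joint density of \<open>(U\<^sub>1, V)\<close> as the sum of the contributions of the events
  \<open>X\<^sub>1 \<le> X\<^sub>2\<close> and \<open>X\<^sub>1 > X\<^sub>2\<close>. For \<open>v > 1\<close> this sum factors as the density of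
  \<open>V\<close> times \<open>f\<^sub>2(u | v)\<close>, and \<open>f\<^sub>2(\<cdot> | v)\<close> integrates to 1 because
  \<open>\<integral> exp (s u - a exp u) du = \<Gamma>(s) / a^s\<close>.

  (ii) \<open>k\<^sub>v(1) = ln (1 + v)\<close>. Put \<open>E = ln (1 + v/\<rho>) + ln (1 + v\<rho>) - 2 ln (1 + v) \<ge> 0\<close>,
  \<open>H = ln (1 + v/\<rho>) - ln (1 + v\<rho>) \<ge> 0\<close> and \<open>d = ln ((\<rho> + v) / (1 + v\<rho>)) \<ge> 0\<close>.
  Since \<open>(\<rho> + v)^(2\<alpha>) = exp (2\<alpha>d) (1 + v\<rho>)^(2\<alpha>)\<close>, the bound \<open>k\<^sub>v(\<rho>) \<ge> ln (1 + v)\<close>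
  amounts to \<open>(E + H) + exp (2\<alpha>d) (E - H) \<ge> 0\<close>, which follows from
  \<open>exp (2y) \<le> (1 + y) / (1 - y)\<close> once \<open>\<alpha> d H \<le> E\<close>. The latter combines \<open>2\<alpha>(v - 1) \<le> 1\<close>
  with \<open>d H \<le> 2 (v - 1) E\<close>, a monotonicity argument in \<open>\<rho>\<close> resting on the Pade bound
  \<open>ln x \<le> (x - 1)(x + 5) / (4x + 2)\<close>; the restriction \<open>v \<le> 1 + \<surd>3\<close> is only used
  through \<open>v \<le> 11/4\<close>.
\<close>

section \<open>The joint law of \<open>U\<^sub>1\<close> and \<open>V\<close>\<close>

lemma nn_integral_indicator_UN_incseq:
  assumes f[measurable]: "f \<in> borel_measurable M"
    and S: "incseq S" "\<And>n. S n \<in> sets M"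
  shows "(\<integral>\<^sup>+x. f x * indicator (\<Union>n. S n) x \<partial>M) = (SUP n. \<integral>\<^sup>+x. f x * indicator (S n) x \<partial>M)"
proof -
  have "range S \<subseteq> sets M" using S(2) by auto
  then show ?thesis
    using SUP_emeasure_incseq[of S "density M f"] S
    by (simp add: emeasure_density sets.countable_UN)
qed

lemma UN_exp_interval: "c > 0 \<Longrightarrow> (\<Union>n::nat. {c * exp (- real n - 1) .. c * exp (real n + 1)}) = {0<..}"
proof (intro equalityI subsetI)
  fix x assume "c > 0" "x \<in> (\<Union>n::nat. {c * exp (- real n - 1) .. c * exp (real n + 1)})"
  then show "x \<in> {0<..}" by (auto intro: less_le_trans[OF mult_pos_pos[OF \<open>c > 0\<close> exp_gt_zero]])
next
  fix x :: real assume c: "c > 0" and "x \<in> {0<..}"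
  then have x: "exp (ln (x / c)) = x / c" by simp
  obtain n :: nat where "\<bar>ln (x / c)\<bar> \<le> real n" using real_arch_simple by blast
  then have "exp (- real n - 1) \<le> exp (ln (x / c))" "exp (ln (x / c)) \<le> exp (real n + 1)"
    by auto
  then have "exp (- real n - 1) \<le> x / c" "x / c \<le> exp (real n + 1)"
    unfolding x .
  then have "x \<in> {c * exp (- real n - 1) .. c * exp (real n + 1)}"
    using c by (auto simp: field_simps)
  then show "x \<in> (\<Union>n. {c * exp (- real n - 1) .. c * exp (real n + 1)})" by blast
qed

lemma nn_integral_exp_substitution:
  fixes f :: "real \<Rightarrow> ennreal"
  assumes f[measurable]: "f \<in> borel_measurable borel" and c: "c > 0"
  shows "(\<integral>\<^sup>+x. f x * indicator {0<..} x \<partial>lborel) = (\<integral>\<^sup>+u. f (c * exp u) * ennreal (c * exp u) \<partial>lborel)"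
proof -
  define I :: "nat \<Rightarrow> real set" where "I n = {- real n - 1 .. real n + 1}" for n
  have I_UN: "(\<Union>n. I n) = UNIV"
  proof -
    have "u \<in> I (nat \<lceil>\<bar>u\<bar>\<rceil>)" for u
      using le_of_int_ceiling[of "\<bar>u\<bar>"] unfolding I_def abs_le_iff by auto
    then show ?thesis by blast
  qed
  have "incseq (\<lambda>n. {c * exp (- real n - 1) .. c * exp (real n + 1)})"
    using c by (auto simp: incseq_def)
  then have "(\<integral>\<^sup>+x. f x * indicator {0<..} x \<partial>lborel)
      = (SUP n. \<integral>\<^sup>+x. f x * indicator {c * exp (- real n - 1) .. c * exp (real n + 1)} x \<partial>lborel)"
    by (simp add: nn_integral_indicator_UN_incseq flip: UN_exp_interval[OF c])
  also have "\<dots> = (SUP n. \<integral>\<^sup>+u. f (c * exp u) * ennreal (c * exp u) * indicator (I n) u \<partial>lborel)"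
    unfolding I_def
    by (intro SUP_cong refl nn_integral_substitution_aux[where g = "\<lambda>u. c * exp u"])
       (auto intro!: derivative_eq_intros continuous_intros simp: c less_imp_le)
  also have "\<dots> = (\<integral>\<^sup>+u. f (c * exp u) * ennreal (c * exp u) * indicator (\<Union>n. I n) u \<partial>lborel)"
    by (intro nn_integral_indicator_UN_incseq[symmetric]) (auto simp: I_def incseq_def)
  also have "\<dots> = (\<integral>\<^sup>+u. f (c * exp u) * ennreal (c * exp u) \<partial>lborel)"
    by (simp add: I_UN)
  finally show ?thesis .
qed

lemma nn_integral_exp_gamma:
  fixes a s :: real assumes a: "a > 0" and s: "s > 0"
  shows "(\<integral>\<^sup>+u. ennreal (exp (s * u) * exp (- (a * exp u))) \<partial>lborel) = ennreal (Gamma s / a powr s)"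
proof -
  define f where "f t = ennreal (a powr (-s) * t powr (s - 1) / exp t)" for t
  have [measurable]: "f \<in> borel_measurable borel" unfolding f_def by measurable
  have subst: "f (a * exp u) * ennreal (a * exp u) = ennreal (exp (s * u) * exp (- (a * exp u)))" for u
  proof -
    have "(a * exp u) powr (s - 1) * (a * exp u) = (a * exp u) powr s"
      using a powr_add[of "a * exp u" "s - 1" 1] by simp
    also have "\<dots> = a powr s * exp (s * u)"
      using a by (simp add: powr_def ln_mult exp_add[symmetric] algebra_simps)
    finally have "(a * exp u) powr (s - 1) * (a * exp u) = a powr s * exp (s * u)" .
    then have "a powr (-s) * (a * exp u) powr (s - 1) / exp (a * exp u) * (a * exp u)
        = exp (s * u) * exp (- (a * exp u))"
      using a by (simp add: powr_minus exp_minus field_simps)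
    then show ?thesis using a unfolding f_def by (simp add: ennreal_mult[symmetric])
  qed
  have "ennreal (Gamma s / a powr s) = ennreal (a powr (-s)) * ennreal (Gamma s)"
    using a Gamma_real_pos[OF s] by (simp add: ennreal_mult[symmetric] powr_minus divide_inverse mult.commute)
  also have "\<dots> = (\<integral>\<^sup>+t. ennreal (a powr (-s)) * ennreal (indicator {0..} t * t powr (s - 1) / exp t) \<partial>lborel)"
    by (simp add: Gamma_conv_nn_integral_real[OF s] nn_integral_cmult)
  also have "\<dots> = (\<integral>\<^sup>+t. f t * indicator {0<..} t \<partial>lborel)"
    by (intro nn_integral_cong) (auto simp: f_def ennreal_mult[symmetric] indicator_def)
  also have "\<dots> = (\<integral>\<^sup>+u. ennreal (exp (s * u) * exp (- (a * exp u))) \<partial>lborel)"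
    by (simp add: nn_integral_exp_substitution[OF _ a] subst)
  finally show ?thesis by simp
qed

lemma nn_integral_indep_pair_density:
  fixes M :: "'a measure" and X Y :: "'a \<Rightarrow> real" and h :: "real \<times> real \<Rightarrow> ennreal"
  assumes "prob_space M" and X: "distributed M lborel X f" and Y: "distributed M lborel Y g"
    and indep: "prob_space.indep_var M borel X borel Y"
    and h: "h \<in> borel_measurable (borel \<Otimes>\<^sub>M borel)"
  shows "(\<integral>\<^sup>+\<omega>. h (X \<omega>, Y \<omega>) \<partial>M) = (\<integral>\<^sup>+x. \<integral>\<^sup>+y. f x * g y * h (x, y) \<partial>lborel \<partial>lborel)"
proof -
  interpret prob_space M by fact
  have [measurable]: "X \<in> borel_measurable M" "Y \<in> borel_measurable M"
    using X Y by (auto dest: distributed_measurable)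
  have "distr M lborel X \<Otimes>\<^sub>M distr M lborel Y = distr M borel X \<Otimes>\<^sub>M distr M borel Y"
    by (intro arg_cong2[where f = pair_measure] distr_cong) simp_all
  also have "\<dots> = distr M (borel \<Otimes>\<^sub>M borel) (\<lambda>\<omega>. (X \<omega>, Y \<omega>))"
    using indep unfolding indep_var_distribution_eq by blast
  also have "\<dots> = distr M (lborel \<Otimes>\<^sub>M lborel) (\<lambda>\<omega>. (X \<omega>, Y \<omega>))"
    by (intro distr_cong sets_pair_measure_cong) simp_all
  finally have "distributed M (lborel \<Otimes>\<^sub>M lborel) (\<lambda>\<omega>. (X \<omega>, Y \<omega>)) (\<lambda>(x, y). f x * g y)"
    using X Y by (intro distributed_joint_indep') (auto intro: lborel.sigma_finite_measure_axioms)
  moreover have [measurable]: "h \<in> borel_measurable (lborel \<Otimes>\<^sub>M lborel)"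
    using h by (simp cong: measurable_cong_sets)
  ultimately have "(\<integral>\<^sup>+\<omega>. h (X \<omega>, Y \<omega>) \<partial>M) = (\<integral>\<^sup>+z. (\<lambda>(x, y). f x * g y) z * h z \<partial>(lborel \<Otimes>\<^sub>M lborel))"
    by (simp add: distributed_nn_integral)
  also have "\<dots> = (\<integral>\<^sup>+x. \<integral>\<^sup>+y. f x * g y * h (x, y) \<partial>lborel \<partial>lborel)"
    using X Y by (subst lborel.nn_integral_fst[symmetric]) (auto dest: distributed_borel_measurable)
  finally show ?thesis .
qed

lemma gamma_density_nonneg: "\<alpha> > 0 \<Longrightarrow> \<theta> > 0 \<Longrightarrow> gamma_density \<alpha> \<theta> x \<ge> 0"
  unfolding gamma_density_def by auto

lemma gamma_density_nonpos_eq_0: "x \<le> 0 \<Longrightarrow> gamma_density \<alpha> \<theta> x = 0"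
  unfolding gamma_density_def by auto

lemma borel_measurable_gamma_density[measurable]: "gamma_density \<alpha> \<theta> \<in> borel_measurable borel"
  unfolding gamma_density_def by measurable

lemma nn_integral_lborel_scale:
  fixes c :: real assumes [measurable]: "f \<in> borel_measurable borel" and "c > 0"
  shows "(\<integral>\<^sup>+y. f y \<partial>lborel) = (\<integral>\<^sup>+v. ennreal c * f (c * v) \<partial>lborel)"
  using nn_integral_real_affine[of f c 0] assms by (simp add: nn_integral_cmult)

text \<open>Density of \<open>(ln X - ln \<theta>a, Y / X)\<close> for independent \<open>X \<sim> \<Gamma>(\<alpha>, \<theta>a)\<close> and
  \<open>Y \<sim> \<Gamma>(\<alpha>, \<theta>b)\<close>; the last two factors form the Jacobian of
  \<open>(u, v) \<mapsto> (\<theta>a e\<^sup>u, \<theta>a e\<^sup>u v)\<close>.\<close>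
definition log_ratio_dens :: "real \<Rightarrow> real \<Rightarrow> real \<Rightarrow> real \<Rightarrow> real \<Rightarrow> real" where
  "log_ratio_dens \<alpha> \<theta>a \<theta>b u v =
     gamma_density \<alpha> \<theta>a (\<theta>a * exp u) * gamma_density \<alpha> \<theta>b (\<theta>a * exp u * v) * (\<theta>a * exp u) * (\<theta>a * exp u)"

lemma log_ratio_dens_nonneg:
  "\<alpha> > 0 \<Longrightarrow> \<theta>a > 0 \<Longrightarrow> \<theta>b > 0 \<Longrightarrow> log_ratio_dens \<alpha> \<theta>a \<theta>b u v \<ge> 0"
  unfolding log_ratio_dens_def by (simp add: gamma_density_nonneg)

lemma nn_integral_gamma_pair_log_ratio:
  fixes G :: "real \<Rightarrow> real \<Rightarrow> ennreal"
  assumes [measurable]: "case_prod G \<in> borel_measurable (borel \<Otimes>\<^sub>M borel)"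
    and a: "\<alpha> > 0" and ta: "\<theta>a > 0" and tb: "\<theta>b > 0"
  shows "(\<integral>\<^sup>+x. \<integral>\<^sup>+y. G (ln x - ln \<theta>a) (y / x) * ennreal (gamma_density \<alpha> \<theta>a x * gamma_density \<alpha> \<theta>b y) \<partial>lborel \<partial>lborel)
       = (\<integral>\<^sup>+v. \<integral>\<^sup>+u. G u v * ennreal (log_ratio_dens \<alpha> \<theta>a \<theta>b u v) \<partial>lborel \<partial>lborel)"
proof -
  define g where "g x v = G (ln x - ln \<theta>a) v * ennreal (gamma_density \<alpha> \<theta>a x * gamma_density \<alpha> \<theta>b (x * v) * x)" for x v
  have [measurable]: "case_prod g \<in> borel_measurable (borel \<Otimes>\<^sub>M borel)" unfolding g_def by measurable
  note nonneg = gamma_density_nonneg[OF a ta] gamma_density_nonneg[OF a tb]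
  have ratio: "(\<integral>\<^sup>+y. G (ln x - ln \<theta>a) (y / x) * ennreal (gamma_density \<alpha> \<theta>a x * gamma_density \<alpha> \<theta>b y) \<partial>lborel)
      = (\<integral>\<^sup>+v. g x v \<partial>lborel)" for x
  proof (cases "x > 0")
    case True
    then show ?thesis unfolding g_def
      by (subst nn_integral_lborel_scale[of _ x])
         (auto intro!: nn_integral_cong simp: nonneg ennreal_mult' mult_ac)
  qed (simp add: g_def gamma_density_nonpos_eq_0)
  have log: "(\<integral>\<^sup>+x. g x v \<partial>lborel) = (\<integral>\<^sup>+u. G u v * ennreal (log_ratio_dens \<alpha> \<theta>a \<theta>b u v) \<partial>lborel)" for v
  proof -
    have "(\<integral>\<^sup>+x. g x v \<partial>lborel) = (\<integral>\<^sup>+x. g x v * indicator {0<..} x \<partial>lborel)"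
      by (intro nn_integral_cong) (auto simp: g_def gamma_density_nonpos_eq_0 indicator_def)
    also have "\<dots> = (\<integral>\<^sup>+u. g (\<theta>a * exp u) v * ennreal (\<theta>a * exp u) \<partial>lborel)"
      using ta by (intro nn_integral_exp_substitution) simp_all
    also have "\<dots> = (\<integral>\<^sup>+u. G u v * ennreal (log_ratio_dens \<alpha> \<theta>a \<theta>b u v) \<partial>lborel)"
      using ta by (intro nn_integral_cong)
        (simp add: g_def log_ratio_dens_def ln_mult nonneg ennreal_mult'[symmetric] mult_ac)
    finally show ?thesis .
  qed
  have "(\<integral>\<^sup>+x. \<integral>\<^sup>+y. G (ln x - ln \<theta>a) (y / x) * ennreal (gamma_density \<alpha> \<theta>a x * gamma_density \<alpha> \<theta>b y) \<partial>lborel \<partial>lborel)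
      = (\<integral>\<^sup>+x. \<integral>\<^sup>+v. g x v \<partial>lborel \<partial>lborel)"
    by (simp add: ratio)
  also have "\<dots> = (\<integral>\<^sup>+v. \<integral>\<^sup>+x. g x v \<partial>lborel \<partial>lborel)"
    by (rule lborel_pair.Fubini') measurable
  finally show ?thesis by (simp add: log)
qed

text \<open>Density of \<open>(U\<^sub>1, V)\<close>: the event \<open>X\<^sub>1 \<le> X\<^sub>2\<close> contributes the first summand and
  \<open>X\<^sub>1 > X\<^sub>2\<close> the second.\<close>
definition min_max_dens :: "real \<Rightarrow> real \<Rightarrow> real \<Rightarrow> real \<Rightarrow> real \<Rightarrow> ennreal" where
  "min_max_dens \<alpha> \<theta>1 \<theta>2 u v =
     indicator {1..} v * ennreal (log_ratio_dens \<alpha> \<theta>1 \<theta>2 u v)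
       + indicator {1<..} v * ennreal (log_ratio_dens \<alpha> \<theta>2 \<theta>1 u v)"

lemma borel_measurable_min_max_dens[measurable]:
  "case_prod (min_max_dens \<alpha> \<theta>1 \<theta>2) \<in> borel_measurable (borel \<Otimes>\<^sub>M borel)"
  unfolding min_max_dens_def log_ratio_dens_def by measurable

lemma nn_integral_gamma_pair_min_max:
  fixes G :: "real \<Rightarrow> real \<Rightarrow> ennreal"
  assumes [measurable]: "case_prod G \<in> borel_measurable (borel \<Otimes>\<^sub>M borel)"
    and a: "\<alpha> > 0" and t1: "\<theta>1 > 0" and t2: "\<theta>2 > 0"
  shows "(\<integral>\<^sup>+x. \<integral>\<^sup>+y. G (ln (min x y) - H_M \<theta>1 \<theta>2 x y) (max x y / min x y)
              * ennreal (gamma_density \<alpha> \<theta>1 x * gamma_density \<alpha> \<theta>2 y) \<partial>lborel \<partial>lborel)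
       = (\<integral>\<^sup>+v. \<integral>\<^sup>+u. G u v * min_max_dens \<alpha> \<theta>1 \<theta>2 u v \<partial>lborel \<partial>lborel)"
proof -
  define g1 where "g1 = gamma_density \<alpha> \<theta>1"
  define g2 where "g2 = gamma_density \<alpha> \<theta>2"
  define G1 where "G1 u v = indicator {1..} v * G u v" for u v
  define G2 where "G2 u v = indicator {1<..} v * G u v" for u v
  have [measurable]: "case_prod G1 \<in> borel_measurable (borel \<Otimes>\<^sub>M borel)"
    "case_prod G2 \<in> borel_measurable (borel \<Otimes>\<^sub>M borel)"
    unfolding G1_def G2_def by measurable
  have cases: "G (ln (min x y) - H_M \<theta>1 \<theta>2 x y) (max x y / min x y) * ennreal (g1 x * g2 y)
      = G1 (ln x - ln \<theta>1) (y / x) * ennreal (g1 x * g2 y) + G2 (ln y - ln \<theta>2) (x / y) * ennreal (g1 x * g2 y)"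
    for x y
  proof (cases "x > 0 \<and> y > 0")
    case True
    then show ?thesis
      by (cases "x \<le> y") (simp_all add: G1_def G2_def H_M_def min_def max_def field_simps)
  qed (auto simp: g1_def g2_def gamma_density_nonpos_eq_0)
  have swap: "(\<integral>\<^sup>+x. \<integral>\<^sup>+y. G2 (ln y - ln \<theta>2) (x / y) * ennreal (g1 x * g2 y) \<partial>lborel \<partial>lborel)
      = (\<integral>\<^sup>+y. \<integral>\<^sup>+x. G2 (ln y - ln \<theta>2) (x / y) * ennreal (g2 y * g1 x) \<partial>lborel \<partial>lborel)"
    by (subst lborel_pair.Fubini') (auto simp: g1_def g2_def mult.commute)
  have "(\<integral>\<^sup>+x. \<integral>\<^sup>+y. G (ln (min x y) - H_M \<theta>1 \<theta>2 x y) (max x y / min x y) * ennreal (g1 x * g2 y) \<partial>lborel \<partial>lborel)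
      = (\<integral>\<^sup>+x. \<integral>\<^sup>+y. G1 (ln x - ln \<theta>1) (y / x) * ennreal (g1 x * g2 y) \<partial>lborel \<partial>lborel)
        + (\<integral>\<^sup>+y. \<integral>\<^sup>+x. G2 (ln y - ln \<theta>2) (x / y) * ennreal (g2 y * g1 x) \<partial>lborel \<partial>lborel)"
    unfolding cases swap[symmetric] by (simp add: nn_integral_add g1_def g2_def)
  also have "\<dots> = (\<integral>\<^sup>+v. \<integral>\<^sup>+u. G1 u v * ennreal (log_ratio_dens \<alpha> \<theta>1 \<theta>2 u v) \<partial>lborel \<partial>lborel)
        + (\<integral>\<^sup>+v. \<integral>\<^sup>+u. G2 u v * ennreal (log_ratio_dens \<alpha> \<theta>2 \<theta>1 u v) \<partial>lborel \<partial>lborel)"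
    unfolding g1_def g2_def
    by (simp add: nn_integral_gamma_pair_log_ratio a t1 t2)
  also have "\<dots> = (\<integral>\<^sup>+v. \<integral>\<^sup>+u. G u v * min_max_dens \<alpha> \<theta>1 \<theta>2 u v \<partial>lborel \<partial>lborel)"
    unfolding min_max_dens_def G1_def G2_def log_ratio_dens_def
    by (simp add: nn_integral_add distrib_left mult_ac)
  finally show ?thesis unfolding g1_def g2_def .
qed

definition cond_dens_norm :: "real \<Rightarrow> real \<Rightarrow> real \<Rightarrow> real" where
  "cond_dens_norm \<alpha> \<rho> v =
     Gamma (2*\<alpha>) * (1 / (\<rho> powr \<alpha> * (1 + v/\<rho>) powr (2*\<alpha>)) + \<rho> powr \<alpha> / (1 + v * \<rho>) powr (2*\<alpha>))"

lemma cond_dens_norm_pos: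
  assumes "\<alpha> > 0" "\<rho> > 0" "v > 0" shows "cond_dens_norm \<alpha> \<rho> v > 0"
proof -
  have "1 + v / \<rho> > 0" "1 + v * \<rho> > 0" using assms by (auto intro: add_pos_pos)
  then show ?thesis unfolding cond_dens_norm_def using assms by (intro mult_pos_pos add_pos_pos) auto
qed

lemma cond_dens_eq:
  "cond_dens \<alpha> \<rho> v u =
     (\<rho> powr (-\<alpha>) * (exp (2*\<alpha>*u) * exp (- ((1 + v * (1/\<rho>)) * exp u)))
       + \<rho> powr \<alpha> * (exp (2*\<alpha>*u) * exp (- ((1 + v * \<rho>) * exp u))))
     / cond_dens_norm \<alpha> \<rho> v"
  unfolding cond_dens_def cond_dens_norm_def by (simp add: algebra_simps)

lemma nn_integral_cond_dens:
  assumes a: "\<alpha> > 0" and r: "\<rho> > 0" and v: "v > 0"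
  shows "(\<integral>\<^sup>+u. ennreal (cond_dens \<alpha> \<rho> v u) \<partial>lborel) = 1"
proof -
  define f where "f c u = exp (2*\<alpha>*u) * exp (- ((1 + v * c) * exp u))" for c u
  have [measurable]: "f c \<in> borel_measurable borel" for c unfolding f_def by measurable
  have int_f: "(\<integral>\<^sup>+u. ennreal (f c u) \<partial>lborel) = ennreal (Gamma (2*\<alpha>) / (1 + v * c) powr (2*\<alpha>))"
    if "c > 0" for c
    unfolding f_def using nn_integral_exp_gamma[of "1 + v * c" "2*\<alpha>"] that v a by (simp add: add_pos_pos)
  define N where "N = cond_dens_norm \<alpha> \<rho> v"
  have N: "N > 0" unfolding N_def using cond_dens_norm_pos[OF a r v] .
  have "(\<integral>\<^sup>+u. ennreal (cond_dens \<alpha> \<rho> v u) \<partial>lborel)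
      = (\<integral>\<^sup>+u. ennreal (1 / N) * (ennreal (\<rho> powr (-\<alpha>)) * ennreal (f (1/\<rho>) u) + ennreal (\<rho> powr \<alpha>) * ennreal (f \<rho> u)) \<partial>lborel)"
    unfolding cond_dens_eq N_def[symmetric] f_def using N
    by (intro nn_integral_cong) (simp add: ennreal_mult[symmetric] ennreal_plus[symmetric] del: ennreal_plus)
  also have "\<dots> = ennreal (1 / N) * ennreal (\<rho> powr (-\<alpha>) * (Gamma (2*\<alpha>) / (1 + v * (1/\<rho>)) powr (2*\<alpha>))
                                           + \<rho> powr \<alpha> * (Gamma (2*\<alpha>) / (1 + v * \<rho>) powr (2*\<alpha>)))"
    using r a by (simp add: nn_integral_cmult nn_integral_add int_f ennreal_mult[symmetric] ennreal_plus[symmetric] del: ennreal_plus)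
  also have "\<rho> powr (-\<alpha>) * (Gamma (2*\<alpha>) / (1 + v * (1/\<rho>)) powr (2*\<alpha>))
               + \<rho> powr \<alpha> * (Gamma (2*\<alpha>) / (1 + v * \<rho>) powr (2*\<alpha>)) = N"
    unfolding N_def cond_dens_norm_def using r by (simp add: powr_minus field_simps)
  finally show ?thesis using N by (simp flip: ennreal_mult)
qed

lemma log_ratio_dens_eq:
  assumes a: "\<alpha> > 0" and ta: "\<theta>a > 0" and tb: "\<theta>b > 0" and v: "v > 0"
  shows "log_ratio_dens \<alpha> \<theta>a \<theta>b u v = v powr (\<alpha> - 1) / (Gamma \<alpha>)^2 *
     ((\<theta>a/\<theta>b) powr \<alpha> * (exp (2*\<alpha>*u) * exp (- ((1 + v * (\<theta>a/\<theta>b)) * exp u))))"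
proof -
  define y where "y = \<theta>a * exp u"
  have y: "y > 0" unfolding y_def using ta by simp
  have pow_y: "y powr (\<alpha> - 1) * (y * v) powr (\<alpha> - 1) * y * y = y powr (2*\<alpha>) * v powr (\<alpha> - 1)"
  proof -
    have "y powr (\<alpha> - 1) * y = y powr \<alpha>" using y powr_add[of y "\<alpha> - 1" 1] by simp
    moreover have "y powr (\<alpha> - 1) * (y * v) powr (\<alpha> - 1) * y * y
        = (y powr (\<alpha> - 1) * y) * (y powr (\<alpha> - 1) * y) * v powr (\<alpha> - 1)"
      using y v by (simp add: powr_mult mult_ac)
    ultimately show ?thesis using y by (simp add: powr_add[symmetric])
  qed
  have pow_exp: "y powr (2*\<alpha>) = \<theta>a powr (2*\<alpha>) * exp (2*\<alpha>*u)"
    unfolding y_def using ta by (simp add: powr_def ln_mult exp_add[symmetric] algebra_simps)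
  have pow_theta: "\<theta>a powr (2*\<alpha>) / (\<theta>a powr \<alpha> * \<theta>b powr \<alpha>) = (\<theta>a/\<theta>b) powr \<alpha>"
  proof -
    have "\<theta>a powr (2*\<alpha>) = \<theta>a powr \<alpha> * \<theta>a powr \<alpha>" by (simp add: powr_add[symmetric])
    then show ?thesis using ta tb by (simp add: powr_divide)
  qed
  have exps: "exp (- y / \<theta>a) * exp (- (y * v) / \<theta>b) = exp (- ((1 + v * (\<theta>a/\<theta>b)) * exp u))"
    unfolding y_def using ta tb by (simp add: exp_add[symmetric] field_simps)
  have "log_ratio_dens \<alpha> \<theta>a \<theta>b u v = (y powr (\<alpha> - 1) * (y * v) powr (\<alpha> - 1) * y * y)
       * (exp (- y / \<theta>a) * exp (- (y * v) / \<theta>b)) / ((Gamma \<alpha>)^2 * (\<theta>a powr \<alpha> * \<theta>b powr \<alpha>))"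
    unfolding log_ratio_dens_def gamma_density_def y_def[symmetric] using y v
    by (simp add: power2_eq_square mult_ac)
  also have "\<dots> = v powr (\<alpha> - 1) / (Gamma \<alpha>)^2 * ((\<theta>a powr (2*\<alpha>) / (\<theta>a powr \<alpha> * \<theta>b powr \<alpha>)) * exp (2*\<alpha>*u)
       * (exp (- y / \<theta>a) * exp (- (y * v) / \<theta>b)))"
    unfolding pow_y pow_exp by (simp add: field_simps)
  finally show ?thesis unfolding pow_theta exps by (simp add: mult_ac)
qed

text \<open>For \<open>v > 1\<close>, the density of \<open>V\<close> at \<open>v\<close>.\<close>
definition ratio_dens :: "real \<Rightarrow> real \<Rightarrow> real \<Rightarrow> real" where
  "ratio_dens \<alpha> \<rho> v = v powr (\<alpha> - 1) / (Gamma \<alpha>)^2 * cond_dens_norm \<alpha> \<rho> v"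

lemma ratio_dens_pos: "\<alpha> > 0 \<Longrightarrow> \<rho> > 0 \<Longrightarrow> v > 0 \<Longrightarrow> ratio_dens \<alpha> \<rho> v > 0"
  unfolding ratio_dens_def by (intro mult_pos_pos divide_pos_pos cond_dens_norm_pos) (auto dest: Gamma_real_pos[of \<alpha>])

lemma rho_of_pos: "\<theta>1 > 0 \<Longrightarrow> \<theta>2 > 0 \<Longrightarrow> rho_of \<theta>1 \<theta>2 > 0"
  unfolding rho_of_def by simp

lemma log_ratio_dens_add_eq:
  assumes a: "\<alpha> > 0" and t1: "\<theta>1 > 0" and t2: "\<theta>2 > 0" and v: "v > 0"
  shows "log_ratio_dens \<alpha> \<theta>1 \<theta>2 u v + log_ratio_dens \<alpha> \<theta>2 \<theta>1 u v
       = ratio_dens \<alpha> (rho_of \<theta>1 \<theta>2) v * cond_dens \<alpha> (rho_of \<theta>1 \<theta>2) v u"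
proof -
  define \<rho> where "\<rho> = rho_of \<theta>1 \<theta>2"
  define E where "E c = exp (2*\<alpha>*u) * exp (- ((1 + v * c) * exp u))" for c
  have r: "\<rho> > 0" unfolding \<rho>_def using t1 t2 by (rule rho_of_pos)
  have "(\<theta>1/\<theta>2) powr \<alpha> * E (\<theta>1/\<theta>2) + (\<theta>2/\<theta>1) powr \<alpha> * E (\<theta>2/\<theta>1)
      = \<rho> powr (-\<alpha>) * E (1/\<rho>) + \<rho> powr \<alpha> * E \<rho>"
    using r t1 t2 unfolding \<rho>_def rho_of_def
    by (cases "\<theta>1 \<le> \<theta>2") (simp_all add: min_def max_def powr_minus powr_divide)
  moreover have "log_ratio_dens \<alpha> \<theta>1 \<theta>2 u v + log_ratio_dens \<alpha> \<theta>2 \<theta>1 u v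
      = v powr (\<alpha> - 1) / (Gamma \<alpha>)^2 * ((\<theta>1/\<theta>2) powr \<alpha> * E (\<theta>1/\<theta>2) + (\<theta>2/\<theta>1) powr \<alpha> * E (\<theta>2/\<theta>1))"
    unfolding log_ratio_dens_eq[OF a t1 t2 v] log_ratio_dens_eq[OF a t2 t1 v] E_def
    by (simp add: algebra_simps)
  moreover have "cond_dens_norm \<alpha> \<rho> v * cond_dens \<alpha> \<rho> v u = \<rho> powr (-\<alpha>) * E (1/\<rho>) + \<rho> powr \<alpha> * E \<rho>"
    unfolding cond_dens_eq E_def using cond_dens_norm_pos[OF a r v] by simp
  ultimately show ?thesis unfolding ratio_dens_def \<rho>_def by (simp add: mult.assoc)
qed

lemma nn_integral_min_max_dens:
  fixes g :: "real \<Rightarrow> ennreal"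
  assumes a: "\<alpha> > 0" and t1: "\<theta>1 > 0" and t2: "\<theta>2 > 0" and v: "v \<noteq> 1"
    and [measurable]: "g \<in> borel_measurable borel"
  shows "(\<integral>\<^sup>+u. g u * min_max_dens \<alpha> \<theta>1 \<theta>2 u v \<partial>lborel)
       = indicator {1<..} v * ennreal (ratio_dens \<alpha> (rho_of \<theta>1 \<theta>2) v)
           * (\<integral>\<^sup>+u. g u * ennreal (cond_dens \<alpha> (rho_of \<theta>1 \<theta>2) v u) \<partial>lborel)"
proof (cases "v < 1")
  case False
  with v have v: "v > 1" by simp
  define \<rho> where "\<rho> = rho_of \<theta>1 \<theta>2"
  have r: "\<rho> > 0" unfolding \<rho>_def using t1 t2 by (rule rho_of_pos)
  have "min_max_dens \<alpha> \<theta>1 \<theta>2 u v = ennreal (ratio_dens \<alpha> \<rho> v) * ennreal (cond_dens \<alpha> \<rho> v u)" for u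
    using v log_ratio_dens_add_eq[OF a t1 t2, of v u] ratio_dens_pos[OF a r, of v]
      log_ratio_dens_nonneg[OF a t1 t2] log_ratio_dens_nonneg[OF a t2 t1]
    unfolding min_max_dens_def \<rho>_def by (simp add: ennreal_mult' ennreal_plus[symmetric] del: ennreal_plus)
  moreover have [measurable]: "cond_dens \<alpha> \<rho> v \<in> borel_measurable borel"
    unfolding cond_dens_def by measurable
  ultimately show ?thesis
    using v unfolding \<rho>_def[symmetric]
    by (simp add: nn_integral_cmult[symmetric] mult_ac)
qed (simp add: min_max_dens_def)

lemma nn_integral_log_min_ratio:
  fixes M :: "'a measure" and X1 X2 :: "'a \<Rightarrow> real" and G :: "real \<Rightarrow> real \<Rightarrow> ennreal"
  assumes a: "\<alpha> > 0" and t1: "\<theta>1 > 0" and t2: "\<theta>2 > 0"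
    and "prob_space M"
    and X1: "distributed M lborel X1 (\<lambda>x. ennreal (gamma_density \<alpha> \<theta>1 x))"
    and X2: "distributed M lborel X2 (\<lambda>x. ennreal (gamma_density \<alpha> \<theta>2 x))"
    and indep: "prob_space.indep_var M borel X1 borel X2"
    and G[measurable]: "case_prod G \<in> borel_measurable (borel \<Otimes>\<^sub>M borel)"
  shows "(\<integral>\<^sup>+\<omega>. G (ln (min (X1 \<omega>) (X2 \<omega>)) - H_M \<theta>1 \<theta>2 (X1 \<omega>) (X2 \<omega>))
                  (max (X1 \<omega>) (X2 \<omega>) / min (X1 \<omega>) (X2 \<omega>)) \<partial>M)
       = (\<integral>\<^sup>+v. \<integral>\<^sup>+u. G u v * min_max_dens \<alpha> \<theta>1 \<theta>2 u v \<partial>lborel \<partial>lborel)"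
proof -
  have "(\<lambda>(x, y). G (ln (min x y) - H_M \<theta>1 \<theta>2 x y) (max x y / min x y)) \<in> borel_measurable (borel \<Otimes>\<^sub>M borel)"
    unfolding H_M_def by measurable
  then show ?thesis
    using nn_integral_indep_pair_density[OF \<open>prob_space M\<close> X1 X2 indep,
        of "\<lambda>(x, y). G (ln (min x y) - H_M \<theta>1 \<theta>2 x y) (max x y / min x y)"]
      nn_integral_gamma_pair_min_max[OF G a t1 t2]
    by (simp add: gamma_density_nonneg a t1 t2 ennreal_mult[symmetric] mult.commute)
qed

lemma emeasure_log_min_ratio_eq:
  fixes M :: "'a measure" and X1 X2 :: "'a \<Rightarrow> real" and A B :: "real set"
  assumes a: "\<alpha> > 0" and t1: "\<theta>1 > 0" and t2: "\<theta>2 > 0"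
    and "prob_space M"
    and X1: "distributed M lborel X1 (\<lambda>x. ennreal (gamma_density \<alpha> \<theta>1 x))"
    and X2: "distributed M lborel X2 (\<lambda>x. ennreal (gamma_density \<alpha> \<theta>2 x))"
    and indep: "prob_space.indep_var M borel X1 borel X2"
    and [measurable]: "A \<in> sets borel" "B \<in> sets borel"
  shows "emeasure M {\<omega> \<in> space M. ln (min (X1 \<omega>) (X2 \<omega>)) - H_M \<theta>1 \<theta>2 (X1 \<omega>) (X2 \<omega>) \<in> A
                 \<and> max (X1 \<omega>) (X2 \<omega>) / min (X1 \<omega>) (X2 \<omega>) \<in> B}
       = (\<integral>\<^sup>+ v. indicator B v * (\<integral>\<^sup>+ u. indicator A u * ennreal (cond_dens \<alpha> (rho_of \<theta>1 \<theta>2) v u) \<partial>lborel)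
            \<partial>(distr M borel (\<lambda>\<omega>. max (X1 \<omega>) (X2 \<omega>) / min (X1 \<omega>) (X2 \<omega>))))"
proof -
  define U where "U x y = ln (min x y) - H_M \<theta>1 \<theta>2 x y" for x y
  define R where "R x y = max x y / min x y" for x y :: real
  define F where "F v = (\<integral>\<^sup>+u. indicator A u * ennreal (cond_dens \<alpha> (rho_of \<theta>1 \<theta>2) v u) \<partial>lborel)" for v
  define m where "m v = indicator {1<..} v * ennreal (ratio_dens \<alpha> (rho_of \<theta>1 \<theta>2) v)" for v :: real
  have [measurable]: "X1 \<in> borel_measurable M" "X2 \<in> borel_measurable M"
    using X1 X2 by (auto dest: distributed_measurable)
  have [measurable]: "case_prod U \<in> borel_measurable (borel \<Otimes>\<^sub>M borel)"
    "case_prod R \<in> borel_measurable (borel \<Otimes>\<^sub>M borel)"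
    unfolding U_def R_def H_M_def by measurable
  have [measurable]: "F \<in> borel_measurable borel"
    unfolding F_def cond_dens_def by measurable
  have by_density: "(\<integral>\<^sup>+\<omega>. G (U (X1 \<omega>) (X2 \<omega>)) (R (X1 \<omega>) (X2 \<omega>)) \<partial>M)
      = (\<integral>\<^sup>+v. \<integral>\<^sup>+u. G u v * min_max_dens \<alpha> \<theta>1 \<theta>2 u v \<partial>lborel \<partial>lborel)"
    if "case_prod G \<in> borel_measurable (borel \<Otimes>\<^sub>M borel)" for G
    using nn_integral_log_min_ratio[OF a t1 t2 \<open>prob_space M\<close> X1 X2 indep that]
    unfolding U_def R_def .
  have fiber: "(\<integral>\<^sup>+u. c * g u * min_max_dens \<alpha> \<theta>1 \<theta>2 u v \<partial>lborel)
      = c * m v * (\<integral>\<^sup>+u. g u * ennreal (cond_dens \<alpha> (rho_of \<theta>1 \<theta>2) v u) \<partial>lborel)"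
    if "v \<noteq> 1" and [measurable]: "g \<in> borel_measurable borel" for c g v
    using nn_integral_min_max_dens[OF a t1 t2 that]
    by (simp add: m_def mult.assoc nn_integral_cmult)
  \<comment> \<open>At \<open>v = 1\<close> only one summand of \<open>min_max_dens\<close> is present, so the factorization
    holds only off this null set.\<close>
  have AE_v: "AE v in lborel. v \<noteq> 1" by (rule AE_lborel_singleton)
  define S where "S = {\<omega> \<in> space M. U (X1 \<omega>) (X2 \<omega>) \<in> A \<and> R (X1 \<omega>) (X2 \<omega>) \<in> B}"
  have "S \<in> sets M" unfolding S_def by measurable
  then have "emeasure M S = (\<integral>\<^sup>+\<omega>. indicator S \<omega> \<partial>M)" by simp
  also have "\<dots> = (\<integral>\<^sup>+\<omega>. indicator A (U (X1 \<omega>) (X2 \<omega>)) * indicator B (R (X1 \<omega>) (X2 \<omega>)) \<partial>M)"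
    by (intro nn_integral_cong) (auto simp: S_def indicator_def)
  also have "\<dots> = (\<integral>\<^sup>+v. \<integral>\<^sup>+u. (indicator A u * indicator B v) * min_max_dens \<alpha> \<theta>1 \<theta>2 u v \<partial>lborel \<partial>lborel)"
    by (rule by_density[of "\<lambda>u v. indicator A u * indicator B v"]) measurable
  also have "\<dots> = (\<integral>\<^sup>+v. indicator B v * m v * F v \<partial>lborel)"
  proof (rule nn_integral_cong_AE, rule eventually_mono[OF AE_v])
    fix v :: real assume "v \<noteq> 1"
    from fiber[OF this, of "indicator A" "indicator B v"]
    show "(\<integral>\<^sup>+u. (indicator A u * indicator B v) * min_max_dens \<alpha> \<theta>1 \<theta>2 u v \<partial>lborel)
        = indicator B v * m v * F v"
      by (simp add: F_def mult_ac)
  qed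
  also have "\<dots> = (\<integral>\<^sup>+v. \<integral>\<^sup>+u. (indicator B v * F v) * min_max_dens \<alpha> \<theta>1 \<theta>2 u v \<partial>lborel \<partial>lborel)"
  proof (rule nn_integral_cong_AE, rule eventually_mono[OF AE_v])
    fix v :: real assume "v \<noteq> 1"
    from fiber[OF this, of "\<lambda>_. 1" "indicator B v * F v"]
    show "indicator B v * m v * F v
        = (\<integral>\<^sup>+u. (indicator B v * F v) * min_max_dens \<alpha> \<theta>1 \<theta>2 u v \<partial>lborel)"
      using a t1 t2 by (cases "v > 0") (auto simp: nn_integral_cond_dens rho_of_pos m_def mult_ac)
  qed
  also have "\<dots> = (\<integral>\<^sup>+\<omega>. indicator B (R (X1 \<omega>) (X2 \<omega>)) * F (R (X1 \<omega>) (X2 \<omega>)) \<partial>M)"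
    by (rule by_density[of "\<lambda>u v. indicator B v * F v", symmetric]) measurable
  also have "\<dots> = (\<integral>\<^sup>+ v. indicator B v * F v \<partial>distr M borel (\<lambda>\<omega>. R (X1 \<omega>) (X2 \<omega>)))"
    by (simp add: nn_integral_distr)
  finally show ?thesis unfolding S_def U_def R_def F_def .
qed

section \<open>The infimum of \<open>k\<^sub>v\<close>\<close>

definition pade_ln :: "real \<Rightarrow> real" where
  "pade_ln x = (x - 1) * (x + 5) / (4 * x + 2)"

lemma ln_le_pade_ln:
  fixes x :: real assumes "1 \<le> x"
  shows "ln x \<le> pade_ln x"
proof -
  define g where "g x = pade_ln x - ln x" for x :: real
  define g' where "g' x = ((2*x+4) * (4*x+2) - 4 * ((x - 1) * (x + 5))) / (4*x+2)^2 - 1/x" for x :: real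
  have deriv: "(g has_real_derivative g' y) (at y)" if "y \<in> {1..x}" for y
  proof -
    have "(g has_real_derivative
       (((1 * (y + 5) + (y - 1) * 1) * (4 * y + 2) - (y - 1) * (y + 5) * (4 * 1)) / (4 * y + 2)^2 - 1 / y)) (at y)"
      using that unfolding g_def pade_ln_def by (auto intro!: derivative_eq_intros simp: power2_eq_square)
    then show ?thesis unfolding g'_def by (simp add: algebra_simps)
  qed
  have "g' y = 4 * (y - 1)^3 / (y * (4*y+2)^2)" if "y \<ge> 1" for y
    unfolding g'_def using that
    by (simp add: divide_simps) (simp add: algebra_simps power2_eq_square power3_eq_cube)
  then have nonneg: "g' y \<ge> 0" if "y \<in> {1..x}" for y
    using that by simp
  have "g 1 \<le> g x" by (rule deriv_nonneg_imp_mono[OF deriv nonneg assms])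
  then show ?thesis by (simp add: g_def pade_ln_def)
qed

lemma exp_two_mult_le_divide:
  fixes y :: real assumes "0 \<le> y" "y < 1"
  shows "exp (2 * y) \<le> (1 + y) / (1 - y)"
proof -
  define g where "g x = ln (1 + x) - ln (1 - x) - 2 * x" for x :: real
  have deriv: "(g has_real_derivative (1/(1+x) + 1/(1-x) - 2)) (at x)" if "x \<in> {0..y}" for x
    using that assms unfolding g_def by (auto intro!: derivative_eq_intros)
  have "1/(1+x) + 1/(1-x) - 2 = 2 * x^2 / ((1+x) * (1-x))" if "x \<in> {0..y}" for x
    using that assms by (simp add: divide_simps) (simp add: algebra_simps power2_eq_square)
  then have nonneg: "1/(1+x) + 1/(1-x) - 2 \<ge> 0" if "x \<in> {0..y}" for x
    using that assms by simp
  have "g 0 \<le> g y" by (rule deriv_nonneg_imp_mono[OF deriv nonneg assms(1)])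
  then have "2 * y \<le> ln ((1+y)/(1-y))" using assms by (simp add: g_def ln_div)
  then show ?thesis using assms by (simp add: ln_ge_iff)
qed

lemma pade_numerator_nonneg:
  fixes t v :: real assumes t: "0 < t" and v: "1 \<le> v" "v \<le> 11/4"
  shows "0 \<le> 2 * v * (11 * v - 3 - 2 * v^2) + t * (-18 + 32 * v + 12 * v^2 + 10 * v^3)
              + t^2 * (-6 + 32 * v^2 + 10 * v^3) + t^3 * (v * (-2 + 6 * v + 8 * v^2))"
proof -
  have "11 * v - 3 - 2 * v^2 = 2 * ((v-1) * (11/4 - v)) + 7/2 * v + 5/2"
    by (simp add: field_simps power2_eq_square)
  moreover have "(v-1) * (11/4 - v) \<ge> 0" using v by simp
  ultimately have c0: "11 * v - 3 - 2 * v^2 \<ge> 0" using v by linarith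
  have "1 \<le> v^2" "1 \<le> v^3" using v by (simp_all add: one_le_power)
  then have c1: "-18 + 32 * v + 12 * v^2 + 10 * v^3 \<ge> 0" and c2: "-6 + 32 * v^2 + 10 * v^3 \<ge> 0"
    and c3: "-2 + 6 * v + 8 * v^2 \<ge> 0"
    using v by linarith+
  have "2 * v * (11 * v - 3 - 2 * v^2) \<ge> 0" using c0 v by simp
  moreover have "t * (-18 + 32 * v + 12 * v^2 + 10 * v^3) \<ge> 0" using c1 t by simp
  moreover have "t^2 * (-6 + 32 * v^2 + 10 * v^3) \<ge> 0" using c2 by simp
  moreover have "t^3 * (v * (-2 + 6 * v + 8 * v^2)) \<ge> 0" using c3 t v by simp
  ultimately show ?thesis by linarith
qed

lemma pade_combination_nonpos:
  fixes t v :: real assumes t: "0 < t" "t \<le> 1" and v: "1 \<le> v" "v \<le> 11/4"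
  shows "2 * (v-1) * (1/(t+v) - 1/t + v/(1+v * t))
           + (1/t + v/(1+v * t) - 1/(t+v)) * pade_ln ((t+v)/(1+v * t))
           + (v/(1+v * t) - 1/(t+v)) * pade_ln ((t+v)/(t * (1+v * t))) \<le> 0"
proof -
  define P where "P = 2 * v * (11 * v - 3 - 2 * v^2) + t * (-18 + 32 * v + 12 * v^2 + 10 * v^3)
              + t^2 * (-6 + 32 * v^2 + 10 * v^3) + t^3 * (v * (-2 + 6 * v + 8 * v^2))"
  define N where "N = t + v"
  define D where "D = 1 + v * t"
  have N: "N > 0" and D: "D > 0" using t v by (auto simp: N_def D_def intro: add_pos_nonneg)
  have A: "4 * N + 2 * D > 0" "4 * N + 2 * t * D > 0"
    using N D t by (auto intro: add_pos_pos)
  have "2 * (v-1) * (1/(t+v) - 1/t + v/(1+v * t))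
           + (1/t + v/(1+v * t) - 1/(t+v)) * pade_ln ((t+v)/(1+v * t))
           + (v/(1+v * t) - 1/(t+v)) * pade_ln ((t+v)/(t * (1+v * t)))
        = - ((1-t)^3 * (v-1) * v * P) / (t * N * D * D * (4 * N + 2 * D) * (4 * N + 2 * t * D))"
    using N D A t unfolding pade_ln_def N_def[symmetric] D_def[symmetric]
    apply (simp add: divide_simps)
    apply (simp add: P_def N_def D_def algebra_simps power2_eq_square power3_eq_cube)
    done
  moreover have "(1-t)^3 * (v-1) * v * P / (t * N * D * D * (4 * N + 2 * D) * (4 * N + 2 * t * D)) \<ge> 0"
    using t v N D A pade_numerator_nonneg[OF t(1) v] unfolding P_def
    by (intro divide_nonneg_pos mult_nonneg_nonneg mult_pos_pos) auto
  ultimately show ?thesis by simp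
qed

text \<open>The left-hand side minus the right-hand side vanishes at \<open>r = 1\<close> and is increasing in
  \<open>r\<close>: in its derivative both logarithms carry nonnegative coefficients, so they may be
  replaced by their Pade bounds.\<close>
lemma ln_spread_le_excess:
  fixes r v :: real assumes r: "0 < r" "r \<le> 1" and v: "1 \<le> v" "v \<le> 11/4"
  shows "(ln (r + v) - ln r - ln (1 + v * r)) * (ln (r + v) - ln (1 + v * r))
          \<le> 2 * (v - 1) * (ln (r + v) - ln r + ln (1 + v * r) - 2 * ln (1 + v))"
proof -
  define K where "K t = 2 * (v - 1) * (ln (t + v) - ln t + ln (1 + v * t) - 2 * ln (1 + v))
     - (ln (t + v) - ln t - ln (1 + v * t)) * (ln (t + v) - ln (1 + v * t))" for t
  define K' where "K' t = 2 * (v - 1) * (1/(t+v) - 1/t + v/(1+v * t))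
     - ((1/(t+v) - 1/t - v/(1+v * t)) * (ln (t + v) - ln (1 + v * t))
        + (ln (t + v) - ln t - ln (1 + v * t)) * (1/(t+v) - v/(1+v * t)))" for t
  have deriv: "(K has_real_derivative K' t) (at t)" if "t \<in> {r..1}" for t
  proof -
    have "0 < t" "0 < 1 + v * t" using that r v by (auto intro: add_pos_nonneg)
    then show ?thesis unfolding K_def K'_def using v by (auto intro!: derivative_eq_intros)
  qed
  have nonpos: "K' t \<le> 0" if "t \<in> {r..1}" for t
  proof -
    have t: "0 < t" "t \<le> 1" using that r by auto
    have D: "0 < 1 + v * t" and N: "0 < t + v" using t v by (auto intro: add_pos_nonneg)
    define q where "q = (t + v) / (1 + v * t)"
    define x where "x = (t + v) / (t * (1 + v * t))"
    have "1 + v * t \<le> t + v" using mult_nonneg_nonneg[of "1 - t" "v - 1"] t v by (simp add: algebra_simps)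
    then have q: "1 \<le> q" unfolding q_def using D by simp
    have "v * (t * t) \<le> v" using v t by (simp add: mult_le_one mult_left_le)
    then have "t * (1 + v * t) \<le> t + v" by (simp add: algebra_simps)
    then have x: "1 \<le> x" unfolding x_def using D t by simp
    have "1/(t+v) \<le> 1/t" using t v by (simp add: frac_le)
    moreover have "0 \<le> v/(1+v * t)" using v D by simp
    ultimately have c1: "0 \<le> 1/t + v/(1+v * t) - 1/(t+v)" by linarith
    have "1 + v * t \<le> v * (t + v)" using v mult_mono[of 1 v 1 v] by (simp add: algebra_simps)
    then have c2: "0 \<le> v/(1+v * t) - 1/(t+v)" using D N by (simp add: divide_simps)
    have "K' t = 2 * (v - 1) * (1/(t+v) - 1/t + v/(1+v * t)) + (1/t + v/(1+v * t) - 1/(t+v)) * ln q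
          + (v/(1+v * t) - 1/(t+v)) * ln x"
    proof -
      have "ln (t + v) - ln (1 + v * t) = ln q" unfolding q_def using D N by (simp add: ln_div)
      moreover have "ln (t + v) - ln t - ln (1 + v * t) = ln x"
        unfolding x_def using D N t by (simp add: ln_div ln_mult)
      ultimately show ?thesis unfolding K'_def by (simp add: algebra_simps)
    qed
    also have "\<dots> \<le> 2 * (v - 1) * (1/(t+v) - 1/t + v/(1+v * t)) + (1/t + v/(1+v * t) - 1/(t+v)) * pade_ln q
          + (v/(1+v * t) - 1/(t+v)) * pade_ln x"
      using c1 c2 ln_le_pade_ln[OF q] ln_le_pade_ln[OF x]
      by (intro add_mono mult_left_mono order.refl)
    also have "\<dots> \<le> 0" unfolding q_def x_def by (rule pade_combination_nonpos[OF t v])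
    finally show ?thesis .
  qed
  have "K 1 \<le> K r" by (rule deriv_nonpos_imp_antimono[OF deriv nonpos r(2)])
  moreover have "K 1 = 0" unfolding K_def by (simp add: add.commute)
  ultimately show ?thesis unfolding K_def by linarith
qed

lemma exp_combination_nonneg:
  fixes E H y :: real assumes y: "0 \<le> y" and E: "0 \<le> E" and H: "0 \<le> H" and yH: "y * H \<le> E"
  shows "0 \<le> (E + H) + exp (2 * y) * (E - H)"
proof (cases "H \<le> E")
  case False
  have y1: "y < 1"
  proof (rule ccontr)
    assume "\<not> y < 1"
    then have "1 * H \<le> y * H" using H by (intro mult_right_mono) auto
    then show False using False yH by linarith
  qed
  have "exp (2 * y) * (H - E) \<le> (1 + y) / (1 - y) * (H - E)"
    using exp_two_mult_le_divide[OF y y1] False by (intro mult_right_mono) auto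
  also have "\<dots> \<le> E + H"
    using yH y1 by (simp add: divide_simps) (simp add: algebra_simps)
  finally show ?thesis by (simp add: algebra_simps)
qed (use E H in simp)

lemma ln_one_plus_mult_bounds:
  fixes r v :: real assumes r: "0 < r" "r \<le> 1" and v: "1 \<le> v"
  shows "2 * ln (1 + v) \<le> (ln (r + v) - ln r) + ln (1 + v * r)"
    and "ln (1 + v * r) \<le> ln (r + v) - ln r"
    and "ln (1 + v * r) \<le> ln (r + v)"
proof -
  have D: "0 < 1 + v * r" and N: "0 < r + v" using r v by (auto intro: add_pos_nonneg)
  have "0 \<le> v * (1 - r)^2" using v by simp
  then have "r * (1 + v)^2 \<le> (r + v) * (1 + v * r)" by (simp add: algebra_simps power2_eq_square)
  then have "(1 + v)^2 \<le> (r + v) * (1 + v * r) / r" using r by (simp add: field_simps)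
  then have "ln ((1 + v)^2) \<le> ln ((r + v) * (1 + v * r) / r)"
    using v D N r by (subst ln_le_cancel_iff) auto
  then show "2 * ln (1 + v) \<le> (ln (r + v) - ln r) + ln (1 + v * r)"
    using D N r v by (simp add: ln_div ln_mult ln_realpow)
  have "v * (r * r) \<le> v" using v r by (simp add: mult_le_one mult_left_le)
  then have "r * (1 + v * r) \<le> r + v" by (simp add: algebra_simps)
  then have "ln (r * (1 + v * r)) \<le> ln (r + v)"
    using r D N by (subst ln_le_cancel_iff) auto
  then show "ln (1 + v * r) \<le> ln (r + v) - ln r" using r D by (simp add: ln_mult)
  show "ln (1 + v * r) \<le> ln (r + v)"
    using mult_nonneg_nonneg[of "1 - r" "v - 1"] r v D by (simp add: algebra_simps)
qed

lemma k_fun_eq: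
  fixes \<alpha> r v :: real assumes r: "0 < r" and v: "0 \<le> v"
  defines "e \<equiv> exp (2 * (\<alpha> * (ln (r + v) - ln (1 + v * r))))"
  shows "k_fun \<alpha> v r = ((ln (r + v) - ln r) + e * ln (1 + v * r)) / (1 + e)"
proof -
  have D: "0 < 1 + v * r" and N: "0 < r + v" using r v by (auto intro: add_pos_nonneg)
  have powr_eq: "(r + v) powr (2 * \<alpha>) = (1 + v * r) powr (2 * \<alpha>) * e"
    unfolding e_def powr_def using D N by (simp add: exp_add[symmetric] algebra_simps)
  have "1 + v / r = (r + v) / r" using r by (simp add: field_simps)
  then have ln_eq: "ln (1 + v / r) = ln (r + v) - ln r" using r N by (simp add: ln_div)
  have "k_fun \<alpha> v r = ((1 + v * r) powr (2 * \<alpha>) * ((ln (r + v) - ln r) + e * ln (1 + v * r)))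
      / ((1 + v * r) powr (2 * \<alpha>) * (1 + e))"
    unfolding k_fun_def powr_eq ln_eq by (simp add: algebra_simps)
  then show ?thesis using D by simp
qed

lemma ln_one_plus_le_k_fun:
  fixes \<alpha> v r :: real
  assumes a: "\<alpha> > 0" and r: "0 < r" "r \<le> 1"
    and v: "1 \<le> v" "v \<le> 1 + 1 / (2 * \<alpha>)" "v \<le> 1 + sqrt 3"
  shows "ln (1 + v) \<le> k_fun \<alpha> v r"
proof -
  have "sqrt 3 \<le> 7/4" by (rule real_le_lsqrt) (auto simp: power2_eq_square)
  then have v': "v \<le> 11/4" using v by linarith
  define E where "E = (ln (r + v) - ln r) + ln (1 + v * r) - 2 * ln (1 + v)"
  define H where "H = (ln (r + v) - ln r) - ln (1 + v * r)"
  define d where "d = ln (r + v) - ln (1 + v * r)"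
  define e where "e = exp (2 * (\<alpha> * d))"
  have E: "0 \<le> E" and H: "0 \<le> H" and d: "0 \<le> d"
    using ln_one_plus_mult_bounds[OF r v(1)] unfolding E_def H_def d_def by simp_all
  have "d * H \<le> 2 * (v - 1) * E"
    using ln_spread_le_excess[OF r v(1) v'] unfolding E_def H_def d_def
    by (simp add: algebra_simps)
  then have "\<alpha> * d * H \<le> 2 * \<alpha> * (v - 1) * E"
    using mult_left_mono[of _ _ \<alpha>] a by (fastforce simp: algebra_simps)
  also have "\<dots> \<le> E"
    using E v(1,2) a by (intro mult_left_le_one_le) (simp_all add: field_simps)
  finally have "0 \<le> (E + H) + e * (E - H)"
    unfolding e_def using a d E H by (intro exp_combination_nonneg) auto
  then have "ln (1 + v) * (1 + e) \<le> (ln (r + v) - ln r) + e * ln (1 + v * r)"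
    unfolding E_def H_def by (simp add: algebra_simps)
  moreover have "k_fun \<alpha> v r = ((ln (r + v) - ln r) + e * ln (1 + v * r)) / (1 + e)"
    unfolding e_def d_def using k_fun_eq[OF r(1), of v \<alpha>] v by simp
  ultimately show ?thesis by (simp add: pos_le_divide_eq add_pos_nonneg e_def)
qed

lemma INF_k_fun_eq:
  assumes a: "\<alpha> > 0" and v: "1 \<le> v" "v \<le> min (1 + 1 / (2*\<alpha>)) (1 + sqrt 3)"
  shows "(INF \<rho>\<in>{0<..1}. k_fun \<alpha> v \<rho>) = ln (1 + v)"
proof -
  have "(1 + v) powr (2 * \<alpha>) > 0" using v by simp
  then have "k_fun \<alpha> v 1 = ln (1 + v)" unfolding k_fun_def by (simp add: add.commute field_simps)
  moreover have "k_fun \<alpha> v 1 \<le> k_fun \<alpha> v r" if "r \<in> {0<..1}" for r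
    using ln_one_plus_le_k_fun[OF a _ _ v(1)] that v \<open>k_fun \<alpha> v 1 = ln (1 + v)\<close> by auto
  ultimately show ?thesis
    by (metis (no_types, lifting) cInf_eq_minimum greaterThanAtMost_iff image_iff order_refl zero_less_one)
qed

theorem lemma3p2:
  fixes \<alpha> \<theta>1 \<theta>2 :: real
    and M :: "'a measure"
    and X1 X2 :: "'a \<Rightarrow> real"
  assumes "\<alpha> > 0" and "\<theta>1 > 0" and "\<theta>2 > 0"
    and "prob_space M"
    and "distributed M lborel X1 (\<lambda>x. ennreal (gamma_density \<alpha> \<theta>1 x))"
    and "distributed M lborel X2 (\<lambda>x. ennreal (gamma_density \<alpha> \<theta>2 x))"
    and "prob_space.indep_var M borel X1 borel X2"
  shows
    "(let Z1 = (\<lambda>\<omega>. min (X1 \<omega>) (X2 \<omega>));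
          Z2 = (\<lambda>\<omega>. max (X1 \<omega>) (X2 \<omega>));
          U1 = (\<lambda>\<omega>. ln (Z1 \<omega>) - H_M \<theta>1 \<theta>2 (X1 \<omega>) (X2 \<omega>));
          V = (\<lambda>\<omega>. Z2 \<omega> / Z1 \<omega>);
          \<rho> = rho_of \<theta>1 \<theta>2
      in \<forall>A \<in> sets borel. \<forall>B \<in> sets borel.
           emeasure M {\<omega> \<in> space M. U1 \<omega> \<in> A \<and> V \<omega> \<in> B}
           = (\<integral>\<^sup>+ v. indicator B v *
                 (\<integral>\<^sup>+ u. indicator A u * ennreal (cond_dens \<alpha> \<rho> v u) \<partial>lborel)
               \<partial>(distr M borel V)))
     \<and> (\<forall>v::real. 1 \<le> v \<and> v \<le> min (1 + 1 / (2*\<alpha>)) (1 + sqrt 3) \<longrightarrow>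
          (INF \<rho>\<in>{0<..1}. k_fun \<alpha> v \<rho>) = ln (1 + v))"
proof -
  have p2: "\<forall>v::real. 1 \<le> v \<and> v \<le> min (1 + 1 / (2*\<alpha>)) (1 + sqrt 3) \<longrightarrow>
      (INF \<rho>\<in>{0<..1}. k_fun \<alpha> v \<rho>) = ln (1 + v)"
    using INF_k_fun_eq[OF assms(1)] by blast
  show ?thesis unfolding Let_def
  proof (intro conjI ballI)
    fix A B :: "real set" assume "A \<in> sets borel" "B \<in> sets borel"
    then show "emeasure M {\<omega> \<in> space M. ln (min (X1 \<omega>) (X2 \<omega>)) - H_M \<theta>1 \<theta>2 (X1 \<omega>) (X2 \<omega>) \<in> A
                 \<and> max (X1 \<omega>) (X2 \<omega>) / min (X1 \<omega>) (X2 \<omega>) \<in> B}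
       = (\<integral>\<^sup>+ v. indicator B v * (\<integral>\<^sup>+ u. indicator A u * ennreal (cond_dens \<alpha> (rho_of \<theta>1 \<theta>2) v u) \<partial>lborel)
            \<partial>(distr M borel (\<lambda>\<omega>. max (X1 \<omega>) (X2 \<omega>) / min (X1 \<omega>) (X2 \<omega>))))"
      by (rule emeasure_log_min_ratio_eq[OF assms])
  qed (rule p2)
qed

end
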